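(* Let $P$ be a classifier on $\mathbb{R}^n$ with infinite pointwise coverage. Then the label set $L_P$ has at most two elements.
   Context: A classifier is a partition $P$ of $\mathbb{R}^n$ together with a distinguished member $R \in P$, the refinement set, which may be empty and which is both meagre and Lebesgue null. The label set is $L_P = P \setminus \{R\}$ and the feature space is $\bigcup L_P$. For $x \in \mathbb{R}^n$, $P(x)$ denotes the member of $P$ containing $x$. An anchor for $x$ is an open ball $A = B(c,r)$ with $x \in A \subseteq P(x)$; its coverage is $r$. The coverage of $P$ at $x$ is $C_P(x) = \sup\{ r : B(c,r) \text{ is an anchor for } x\}$ ($0$ if no anchor exists, $\infty$ if anchors of arbitrarily large radius exist). $P$ has infinite pointwise coverage if $C_P(x) = \infty$ for every $x$ in the feature space. *)

theory Defs
  imports "HOL-Analysis.Analysis"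
begin

definition nowhere_dense :: "'a::topological_space set \<Rightarrow> bool" where
  "nowhere_dense S \<longleftrightarrow> interior (closure S) = {}"

definition meagre :: "'a::topological_space set \<Rightarrow> bool" where
  "meagre S \<longleftrightarrow> (\<exists>F. countable F \<and> (\<forall>N\<in>F. nowhere_dense N) \<and> S \<subseteq> \<Union>F)"

definition classifier :: "('a::euclidean_space) set set \<Rightarrow> 'a set \<Rightarrow> bool" where
  "classifier P R \<longleftrightarrow>
     \<Union>P = UNIV \<and>
     (\<forall>A\<in>P. \<forall>B\<in>P. A \<noteq> B \<longrightarrow> A \<inter> B = {}) \<and>
     (\<forall>A\<in>P. A \<noteq> R \<longrightarrow> A \<noteq> {}) \<and>
     R \<in> P \<and> meagre R \<and> R \<in> null_sets lebesgue"

definition label_set :: "'a set set \<Rightarrow> 'a set \<Rightarrow> 'a set set" where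
  "label_set P R = P - {R}"

definition feature_space :: "'a set set \<Rightarrow> 'a set \<Rightarrow> 'a set" where
  "feature_space P R = \<Union>(label_set P R)"

definition cell :: "'a set set \<Rightarrow> 'a \<Rightarrow> 'a set" where
  "cell P x = (THE A. A \<in> P \<and> x \<in> A)"

definition anchor :: "('a::metric_space) set set \<Rightarrow> 'a \<Rightarrow> 'a \<Rightarrow> real \<Rightarrow> bool" where
  "anchor P x c r \<longleftrightarrow> x \<in> ball c r \<and> ball c r \<subseteq> cell P x"

definition coverage :: "('a::metric_space) set set \<Rightarrow> 'a \<Rightarrow> ereal" where
  "coverage P x = (if \<exists>c r. anchor P x c r
                   then Sup {ereal r | c r. anchor P x c r} else 0)"

definition infinite_pointwise_coverage :: "('a::euclidean_space) set set \<Rightarrow> 'a set \<Rightarrow> bool" where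
  "infinite_pointwise_coverage P R \<longleftrightarrow> (\<forall>x\<in>feature_space P R. coverage P x = \<infinity>)"

end

theory Submission
  imports Defs
begin

text \<open>Take points \<open>x\<^sub>1, x\<^sub>2, x\<^sub>3\<close> in three distinct labels and let \<open>D\<close> bound their norms.
  Infinite coverage yields, for every \<open>\<rho>\<close>, balls of radius \<open>\<rho>\<close> through the \<open>x\<^sub>i\<close> inside
  their labels; these are pairwise disjoint, so their centres are \<open>2\<rho>\<close> apart, yet have norm
  at most \<open>\<rho> + D\<close>. Since \<open>\<Sum>|c\<^sub>i - c\<^sub>j|\<^sup>2 = 3\<Sum>|c\<^sub>i|\<^sup>2 - |\<Sum>c\<^sub>i|\<^sup>2\<close>, this forces
  \<open>12\<rho>\<^sup>2 \<le> 9(\<rho> + D)\<^sup>2\<close>, which fails once \<open>\<rho> > 7D\<close>.\<close>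

lemma three_distinct_elements:
  assumes "\<not> (finite S \<and> card S \<le> 2)"
  obtains a b c where "a \<in> S" "b \<in> S" "c \<in> S" "a \<noteq> b" "a \<noteq> c" "b \<noteq> c"
proof -
  obtain T where "T \<subseteq> S" "card T = 3"
  proof (cases "finite S")
    case True
    with assms have "3 \<le> card S" by simp
    then show thesis using that obtain_subset_with_card_n by metis
  next
    case False
    then show thesis using that infinite_arbitrarily_large[of S 3] by blast
  qed
  then show thesis using that by (auto simp: card_3_iff)
qed

lemma ball_through_point_in_ball:
  fixes x c :: "'a::real_normed_vector"
  assumes "x \<in> ball c r" "0 < \<rho>" "\<rho> \<le> r"
  obtains c' where "x \<in> ball c' \<rho>" "ball c' \<rho> \<subseteq> ball c r"
proof
  define c' where "c' = x + (\<rho> / r) *\<^sub>R (c - x)"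
  have xc: "dist c x < r" "0 < r" using assms by auto
  have "dist c' x = (\<rho> / r) * dist c x"
    using xc assms(2) by (simp add: c'_def dist_norm norm_minus_commute)
  also have "\<dots> < \<rho>"
    using xc assms(2) by (simp add: field_simps)
  finally show "x \<in> ball c' \<rho>" by (simp add: dist_commute)
  have "c - c' = (1 - \<rho> / r) *\<^sub>R (c - x)" by (simp add: c'_def algebra_simps)
  then have "dist c c' = (1 - \<rho> / r) * dist c x"
    using xc assms(3) by (simp add: dist_norm)
  also have "\<dots> \<le> (1 - \<rho> / r) * r"
    using xc assms(3) by (intro mult_left_mono) auto
  also have "\<dots> = r - \<rho>"
    using xc by (simp add: field_simps)
  finally have "dist c c' \<le> r - \<rho>" .
  show "ball c' \<rho> \<subseteq> ball c r"
  proof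
    fix y assume "y \<in> ball c' \<rho>"
    with dist_triangle[of c y c'] \<open>dist c c' \<le> r - \<rho>\<close> show "y \<in> ball c r" by simp
  qed
qed

lemma coverage_infinite_obtains_ball:
  fixes x :: "'a::real_normed_vector"
  assumes "coverage P x = \<infinity>" "0 < \<rho>"
  obtains c where "x \<in> ball c \<rho>" "ball c \<rho> \<subseteq> cell P x"
proof -
  have "ereal \<rho> < Sup {ereal r | c r. anchor P x c r}"
    using assms unfolding coverage_def by (auto split: if_splits)
  then obtain c r where anchor: "x \<in> ball c r" "ball c r \<subseteq> cell P x" and "\<rho> < r"
    unfolding less_Sup_iff anchor_def by auto
  obtain c' where "x \<in> ball c' \<rho>" "ball c' \<rho> \<subseteq> ball c r"
    using ball_through_point_in_ball[OF anchor(1) assms(2) less_imp_le[OF \<open>\<rho> < r\<close>]] .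
  then show thesis using that anchor(2) by blast
qed

lemma cell_eqI:
  assumes "classifier P R" "A \<in> P" "x \<in> A"
  shows "cell P x = A"
  unfolding cell_def
proof (rule the_equality)
  show "\<And>B. B \<in> P \<and> x \<in> B \<Longrightarrow> B = A"
    using assms unfolding classifier_def by blast
qed (use assms in simp)

lemma label_contains_ball_through:
  assumes "classifier P R" "infinite_pointwise_coverage P R"
    and "A \<in> label_set P R" "x \<in> A" "0 < \<rho>"
  obtains c where "x \<in> ball c \<rho>" "ball c \<rho> \<subseteq> A"
proof -
  have "x \<in> feature_space P R"
    using assms(3,4) unfolding feature_space_def by blast
  then have "coverage P x = \<infinity>"
    using assms(2) unfolding infinite_pointwise_coverage_def by blast
  then obtain c where "x \<in> ball c \<rho>" "ball c \<rho> \<subseteq> cell P x"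
    using coverage_infinite_obtains_ball assms(5) by blast
  moreover have "cell P x = A"
    using assms(1,3,4) cell_eqI unfolding label_set_def by blast
  ultimately show thesis using that by simp
qed

lemma dist_ge_of_disjoint_balls:
  fixes a b :: "'a::real_normed_vector"
  assumes "ball a r \<inter> ball b r = {}"
  shows "2 * r \<le> dist a b"
proof (rule ccontr)
  assume "\<not> 2 * r \<le> dist a b"
  then have "midpoint a b \<in> ball a r \<inter> ball b r"
    by (simp add: dist_midpoint dist_commute)
  then show False using assms by blast
qed

lemma sum_sq_dist_le_three_sum_sq_norm:
  fixes a b c :: "'a::real_inner"
  shows "(dist a b)\<^sup>2 + (dist b c)\<^sup>2 + (dist a c)\<^sup>2 \<le> 3 * ((norm a)\<^sup>2 + (norm b)\<^sup>2 + (norm c)\<^sup>2)"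
proof -
  have "0 \<le> inner (a + b + c) (a + b + c)" by simp
  then show ?thesis
    by (simp add: dist_norm power2_norm_eq_inner inner_commute algebra_simps)
qed

lemma three_disjoint_balls_radius_bound:
  fixes c1 c2 c3 x1 x2 x3 :: "'a::real_inner"
  assumes "ball c1 \<rho> \<inter> ball c2 \<rho> = {}" "ball c2 \<rho> \<inter> ball c3 \<rho> = {}"
    "ball c1 \<rho> \<inter> ball c3 \<rho> = {}"
    and "x1 \<in> ball c1 \<rho>" "x2 \<in> ball c2 \<rho>" "x3 \<in> ball c3 \<rho>"
    and "norm x1 \<le> D" "norm x2 \<le> D" "norm x3 \<le> D"
  shows "\<rho> \<le> 7 * D"
proof (rule ccontr)
  assume "\<not> \<rho> \<le> 7 * D"
  have "0 \<le> D" using assms(7) norm_ge_zero[of x1] by linarith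
  have "0 < \<rho>" using assms(4) zero_le_dist[of c1 x1] unfolding mem_ball by linarith
  have sq_dist: "(2 * \<rho>)\<^sup>2 \<le> (dist a b)\<^sup>2" if "ball a \<rho> \<inter> ball b \<rho> = {}" for a b :: 'a
    using dist_ge_of_disjoint_balls[OF that] \<open>0 < \<rho>\<close> by (intro power_mono) auto
  have sq_norm: "(norm c)\<^sup>2 \<le> (\<rho> + D)\<^sup>2" if "x \<in> ball c \<rho>" "norm x \<le> D" for c x :: 'a
  proof (rule power_mono)
    show "norm c \<le> \<rho> + D"
      using that norm_triangle_ineq[of "c - x" x] by (simp add: dist_norm)
  qed simp
  have "3 * (2 * \<rho>)\<^sup>2 \<le> (dist c1 c2)\<^sup>2 + (dist c2 c3)\<^sup>2 + (dist c1 c3)\<^sup>2"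
    using sq_dist[OF assms(1)] sq_dist[OF assms(2)] sq_dist[OF assms(3)] by linarith
  also have "\<dots> \<le> 3 * ((norm c1)\<^sup>2 + (norm c2)\<^sup>2 + (norm c3)\<^sup>2)"
    by (rule sum_sq_dist_le_three_sum_sq_norm)
  also have "\<dots> \<le> 9 * (\<rho> + D)\<^sup>2"
    using sq_norm[OF assms(4,7)] sq_norm[OF assms(5,8)] sq_norm[OF assms(6,9)] by simp
  also have "\<dots> < 9 * (8 / 7 * \<rho>)\<^sup>2"
    using \<open>0 \<le> D\<close> \<open>0 < \<rho>\<close> \<open>\<not> \<rho> \<le> 7 * D\<close> by (intro mult_strict_left_mono power_strict_mono) auto
  finally show False
    by (simp add: power2_eq_square)
qed

theorem lemma3:
  fixes P :: "(real ^ 'n) set set" and R :: "(real ^ 'n) set"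
  assumes "classifier P R"
    and "infinite_pointwise_coverage P R"
  shows "finite (label_set P R) \<and> card (label_set P R) \<le> 2"
proof (rule ccontr)
  assume "\<not> ?thesis"
  then obtain A1 A2 A3 where A: "A1 \<in> label_set P R" "A2 \<in> label_set P R" "A3 \<in> label_set P R"
    and distinct: "A1 \<noteq> A2" "A1 \<noteq> A3" "A2 \<noteq> A3"
    by (rule three_distinct_elements)
  have "\<forall>A\<in>P. \<forall>B\<in>P. A \<noteq> B \<longrightarrow> A \<inter> B = {}" "\<forall>A\<in>P. A \<noteq> R \<longrightarrow> A \<noteq> {}"
    using assms(1) by (simp_all add: classifier_def)
  then have disjoint: "A1 \<inter> A2 = {}" "A2 \<inter> A3 = {}" "A1 \<inter> A3 = {}"
    and "A1 \<noteq> {}" "A2 \<noteq> {}" "A3 \<noteq> {}"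
    using A distinct by (simp_all add: label_set_def)
  then obtain x1 x2 x3 where x: "x1 \<in> A1" "x2 \<in> A2" "x3 \<in> A3"
    by blast
  define D where "D = max (norm x1) (max (norm x2) (norm x3))"
  define \<rho> where "\<rho> = 7 * D + 1"
  have "0 \<le> D" by (simp add: D_def le_max_iff_disj)
  then have "0 < \<rho>" by (simp add: \<rho>_def)
  note ball = label_contains_ball_through[OF assms _ _ \<open>0 < \<rho>\<close>]
  obtain c1 where c1: "x1 \<in> ball c1 \<rho>" "ball c1 \<rho> \<subseteq> A1" using ball[OF A(1) x(1)] .
  obtain c2 where c2: "x2 \<in> ball c2 \<rho>" "ball c2 \<rho> \<subseteq> A2" using ball[OF A(2) x(2)] .
  obtain c3 where c3: "x3 \<in> ball c3 \<rho>" "ball c3 \<rho> \<subseteq> A3" using ball[OF A(3) x(3)] .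
  have balls_disjoint: "ball c1 \<rho> \<inter> ball c2 \<rho> = {}" "ball c2 \<rho> \<inter> ball c3 \<rho> = {}"
    "ball c1 \<rho> \<inter> ball c3 \<rho> = {}"
    using disjoint c1(2) c2(2) c3(2) by blast+
  have "norm x1 \<le> D" "norm x2 \<le> D" "norm x3 \<le> D"
    by (simp_all add: D_def)
  then have "\<rho> \<le> 7 * D"
    using three_disjoint_balls_radius_bound[OF balls_disjoint c1(1) c2(1) c3(1)] by blast
  then show False by (simp add: \<rho>_def)
qed

end
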